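(* Suppose every constraint function of the DCOP takes values in $\{0,1\}$, i.e. $f_{ij}:D_i\times D_j\to\{0,1\}$ for all constraints. Then for any evaporation rate $\gamma$, the DGLS variants $(A,\gamma,cel)$ and $(M,\gamma,cel)$ described in the context are equivalent: when run from the same initial assignment with the same random choices, in every round $k$ and for all agents $i$, neighbors $j$ and values $d_i\in D_i,d_j\in D_j$, the additive and multiplicative effective costs coincide, $\mathrm{EffCost}^{(k)}_A(d_i,j,d_j)=\mathrm{EffCost}^{(k)}_M(d_i,j,d_j)$ (so the two variants make identical decisions).
   Context: A (binary) Distributed Constraint Optimization Problem (DCOP) consists of agents $1,\dots,n$, each controlling one variable $x_i$ with finite domain $D_i$, and binary constraint functions $f_{ij}:D_i\times D_j\to\mathbb{R}_{\ge0}$ with $f_{ji}=f_{ij}^T$; $\mathcal{N}_i$ is the set of neighbors of $i$. Write $\check f_{ij}=\min f_{ij}$, $\hat f_{ij}=\max f_{ij}$. DGLS is parameterized by a tuple (manner, $\gamma$, scope): manner additive $A$ or multiplicative $M$, evaporation rate $\gamma$, scope among $cel$, $tab$, $row$, $col$; only $cel$ is needed here. Each agent $i$ keeps, for each $j\in\mathcal{N}_i$, a cost modifier $M_{ij}$ (a $|D_i|\times|D_j|$ real matrix), initialized to $0$. The effective cost is $\mathrm{EffCost}_A(d_i,j,d_j)=f_{ij}(d_i,d_j)+M_{ij}(d_i,d_j)$ (additive) or $\mathrm{EffCost}_M(d_i,j,d_j)=f_{ij}(d_i,d_j)\cdot[1+M_{ij}(d_i,d_j)]$ (multiplicative). Initially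 each agent picks a random value $d_i\in D_i$ and sends it to its neighbors. Rounds are synchronous; in each round agent $i$: (1) sets $\bar P_i=\emptyset$ and receives the neighbors' current values $d_j$; (2) computes $d_i^*\in\arg\min_{d\in D_i}\sum_{j\in\mathcal{N}_i}\mathrm{EffCost}(d,j,d_j)$ and gain $\Delta_i=\sum_{j}[\mathrm{EffCost}(d_i,j,d_j)-\mathrm{EffCost}(d_i^*,j,d_j)]$, and exchanges gains with neighbors; (3) if $\Delta_i>0$ and $\Delta_i$ is the best improvement among itself and its neighbors, it sets $d_i\gets d_i^*$; otherwise, if no neighbor can improve (all neighbors' gains are $\le 0$), then for each $j\in\mathcal{N}_i$ it declares $f_{ij}$ violated with probability $\eta=\frac{f_{ij}(d_i,d_j)-\check f_{ij}}{\hat f_{ij}-\check f_{ij}}$, and for each violated one adds $j$ to $\bar P_i$ and sends a SYNC message to $j$; (4) lets $\tilde P_i$ be the set of neighbors from which it received SYNC this round; (5) for each $j\in\mathcal{N}_i$: first evaporates, $M_{ij}\gets\gamma M_{ij}$ entrywise, then (scope $cel$) if $j\in\bar P_i\cup\tilde P_i$, sets $M_{ij}(d_i,d_j)\gets M_{ij}(d_i,d_j)+1$ at the current values $d_i,d_j$; (6) sends its value $d_i$ to its neighbors. *)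

theory Defs
  imports Complex_Main
begin

text \<open>Agents have type 'a (linearly ordered, the
order is used for tie-breaking among equal gains), values have type 'v.\<close>

datatype manner = Add | Mult

type_synonym ('a, 'v) modifiers = "'a \<Rightarrow> 'a \<Rightarrow> 'v \<Rightarrow> 'v \<Rightarrow> real"
type_synonym ('a, 'v) dstate = "('a \<Rightarrow> 'v) \<times> ('a, 'v) modifiers"

definition effcost :: "manner \<Rightarrow> ('a \<Rightarrow> 'a \<Rightarrow> 'v \<Rightarrow> 'v \<Rightarrow> real) \<Rightarrow> ('a, 'v) modifiers
    \<Rightarrow> 'a \<Rightarrow> 'v \<Rightarrow> 'a \<Rightarrow> 'v \<Rightarrow> real" where
  "effcost m f M i di j dj =
     (case m of Add \<Rightarrow> f i j di dj + M i j di dj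
              | Mult \<Rightarrow> f i j di dj * (1 + M i j di dj))"

definition fmin :: "('a \<Rightarrow> 'v set) \<Rightarrow> ('a \<Rightarrow> 'a \<Rightarrow> 'v \<Rightarrow> 'v \<Rightarrow> real) \<Rightarrow> 'a \<Rightarrow> 'a \<Rightarrow> real" where
  "fmin D f i j = Min ((\<lambda>p. f i j (fst p) (snd p)) ` (D i \<times> D j))"

definition fmax :: "('a \<Rightarrow> 'v set) \<Rightarrow> ('a \<Rightarrow> 'a \<Rightarrow> 'v \<Rightarrow> 'v \<Rightarrow> real) \<Rightarrow> 'a \<Rightarrow> 'a \<Rightarrow> real" where
  "fmax D f i j = Max ((\<lambda>p. f i j (fst p) (snd p)) ` (D i \<times> D j))"

text \<open>Violation probability eta (with Isabelle's convention x / 0 = 0 when f_ij is constant).\<close>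
definition eta :: "('a \<Rightarrow> 'v set) \<Rightarrow> ('a \<Rightarrow> 'a \<Rightarrow> 'v \<Rightarrow> 'v \<Rightarrow> real) \<Rightarrow> ('a \<Rightarrow> 'v)
    \<Rightarrow> 'a \<Rightarrow> 'a \<Rightarrow> real" where
  "eta D f x i j = (f i j (x i) (x j) - fmin D f i j) / (fmax D f i j - fmin D f i j)"

text \<open>Randomness of the round: u i j is the uniform draw
in [0,1) used by agent i for constraint f_ij (violated iff u i j < eta);
tb i S is the tie-breaking choice of agent i from its (nonempty) argmin set S.\<close>
definition dgls_step :: "manner \<Rightarrow> ('a::linorder \<Rightarrow> 'v set) \<Rightarrow> ('a \<Rightarrow> 'a set)
    \<Rightarrow> ('a \<Rightarrow> 'a \<Rightarrow> 'v \<Rightarrow> 'v \<Rightarrow> real) \<Rightarrow> real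
    \<Rightarrow> ('a \<Rightarrow> 'a \<Rightarrow> real) \<Rightarrow> ('a \<Rightarrow> 'v set \<Rightarrow> 'v)
    \<Rightarrow> ('a, 'v) dstate \<Rightarrow> ('a, 'v) dstate" where
  "dgls_step m D N f \<gamma> u tb st =
    (let x = fst st; M = snd st;
         C = (\<lambda>i d. \<Sum>j\<in>N i. effcost m f M i d j (x j));
         ds = (\<lambda>i. tb i {d \<in> D i. \<forall>d'\<in>D i. C i d \<le> C i d'});
         \<Delta> = (\<lambda>i. C i (x i) - C i (ds i));
         mv = (\<lambda>i. \<Delta> i > 0 \<and> (\<forall>j\<in>N i. \<Delta> j < \<Delta> i \<or> (\<Delta> j = \<Delta> i \<and> i < j)));
         stuck = (\<lambda>i. \<forall>j\<in>N i. \<Delta> j \<le> 0);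
         viol = (\<lambda>i j. \<not> mv i \<and> stuck i \<and> u i j < eta D f x i j);
         x' = (\<lambda>i. if mv i then ds i else x i);
         M' = (\<lambda>i j a b. \<gamma> * M i j a b +
                 (if j \<in> N i \<and> (viol i j \<or> viol j i) \<and> a = x i \<and> b = x j then 1 else 0))
     in (x', M'))"

primrec dgls_run :: "manner \<Rightarrow> ('a::linorder \<Rightarrow> 'v set) \<Rightarrow> ('a \<Rightarrow> 'a set)
    \<Rightarrow> ('a \<Rightarrow> 'a \<Rightarrow> 'v \<Rightarrow> 'v \<Rightarrow> real) \<Rightarrow> real
    \<Rightarrow> (nat \<Rightarrow> 'a \<Rightarrow> 'a \<Rightarrow> real) \<Rightarrow> (nat \<Rightarrow> 'a \<Rightarrow> 'v set \<Rightarrow> 'v)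
    \<Rightarrow> ('a \<Rightarrow> 'v) \<Rightarrow> nat \<Rightarrow> ('a, 'v) dstate" where
  "dgls_run m D N f \<gamma> u tb x0 0 = (x0, (\<lambda>_ _ _ _. 0))"
| "dgls_run m D N f \<gamma> u tb x0 (Suc k) =
     dgls_step m D N f \<gamma> (u k) (tb k) (dgls_run m D N f \<gamma> u tb x0 k)"

end

theory Submission
  imports Defs
begin

text \<open>Since every constraint is 0/1-valued, the additive modifiers stay equal to f times the
multiplicative ones on every cell: then f + f * M = f * (1 + M), so both variants see the same
effective costs and take the same decisions.  The coupling survives a round because modifiers are
only incremented at a current cell declared violated, which requires u < eta; a cell with
f = 0 is at the minimum of the constraint, where eta = 0 \<le> u, so increments only ever hit cells
with f = 1.\<close>

text \<open>The part of a round that sees the modifiers only through the total effective costs C: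
the new assignment and the violation declarations.\<close>

definition dgls_decisions :: "('a::linorder \<Rightarrow> 'v set) \<Rightarrow> ('a \<Rightarrow> 'a set)
    \<Rightarrow> ('a \<Rightarrow> 'a \<Rightarrow> 'v \<Rightarrow> 'v \<Rightarrow> real) \<Rightarrow> ('a \<Rightarrow> 'a \<Rightarrow> real) \<Rightarrow> ('a \<Rightarrow> 'v set \<Rightarrow> 'v)
    \<Rightarrow> ('a \<Rightarrow> 'v \<Rightarrow> real) \<Rightarrow> ('a \<Rightarrow> 'v) \<Rightarrow> ('a \<Rightarrow> 'v) \<times> ('a \<Rightarrow> 'a \<Rightarrow> bool)" where
  "dgls_decisions D N f u tb C x =
    (let ds = (\<lambda>i. tb i {d \<in> D i. \<forall>d'\<in>D i. C i d \<le> C i d'});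
         \<Delta> = (\<lambda>i. C i (x i) - C i (ds i));
         mv = (\<lambda>i. \<Delta> i > 0 \<and> (\<forall>j\<in>N i. \<Delta> j < \<Delta> i \<or> (\<Delta> j = \<Delta> i \<and> i < j)));
         stuck = (\<lambda>i. \<forall>j\<in>N i. \<Delta> j \<le> 0);
         viol = (\<lambda>i j. \<not> mv i \<and> stuck i \<and> u i j < eta D f x i j)
     in ((\<lambda>i. if mv i then ds i else x i), viol))"

lemma dgls_step_via_decisions:
  "dgls_step m D N f \<gamma> u tb (x, M) =
    (let (x', viol) = dgls_decisions D N f u tb (\<lambda>i d. \<Sum>j\<in>N i. effcost m f M i d j (x j)) x
     in (x', \<lambda>i j a b. \<gamma> * M i j a b +
              (if j \<in> N i \<and> (viol i j \<or> viol j i) \<and> a = x i \<and> b = x j then 1 else 0)))"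
  by (simp add: dgls_step_def dgls_decisions_def Let_def)

lemma tie_break_minimizer_in_domain:
  fixes C :: "'a \<Rightarrow> 'v \<Rightarrow> 'c::linorder"
  assumes "finite (D i)" "D i \<noteq> {}" "\<And>S. S \<noteq> {} \<Longrightarrow> tb i S \<in> S"
  shows "tb i {d \<in> D i. \<forall>d'\<in>D i. C i d \<le> C i d'} \<in> D i"
proof -
  obtain d where "d \<in> D i" "\<forall>d'\<in>D i. C i d \<le> C i d'"
    using ex_is_arg_min_if_finite[OF assms(1,2), of "C i"] unfolding is_arg_min_linorder by blast
  then have "{d \<in> D i. \<forall>d'\<in>D i. C i d \<le> C i d'} \<noteq> {}"
    by blast
  from assms(3)[OF this] show ?thesis
    by blast
qed

lemma dgls_decisions_in_domain:
  assumes "finite (D i)" "D i \<noteq> {}" "\<And>S. S \<noteq> {} \<Longrightarrow> tb i S \<in> S" "x i \<in> D i"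
  shows "fst (dgls_decisions D N f u tb C x) i \<in> D i"
  using tie_break_minimizer_in_domain[of D i tb C] assms
  by (simp add: dgls_decisions_def Let_def)

lemma dgls_decisions_violation:
  "snd (dgls_decisions D N f u tb C x) i j \<Longrightarrow> u i j < eta D f x i j"
  by (simp add: dgls_decisions_def Let_def)

lemma dgls_decisions_cost_cong:
  assumes finD: "\<And>i. finite (D i)" and neD: "\<And>i. D i \<noteq> {}"
    and tbS: "\<And>i S. S \<noteq> {} \<Longrightarrow> tb i S \<in> S" and xD: "\<And>i. x i \<in> D i"
    and C_eq: "\<And>i d. d \<in> D i \<Longrightarrow> C i d = C' i d"
  shows "dgls_decisions D N f u tb C x = dgls_decisions D N f u tb C' x"
proof -
  have minimizers_eq: "{d \<in> D i. \<forall>d'\<in>D i. C i d \<le> C i d'} = {d \<in> D i. \<forall>d'\<in>D i. C' i d \<le> C' i d'}"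
    for i using C_eq by auto
  have at_current: "C i (x i) = C' i (x i)" for i
    using C_eq xD by blast
  have at_choice: "C i (tb i {d \<in> D i. \<forall>d'\<in>D i. C' i d \<le> C' i d'})
               = C' i (tb i {d \<in> D i. \<forall>d'\<in>D i. C' i d \<le> C' i d'})" for i
    using C_eq tie_break_minimizer_in_domain[of D i tb C'] finD neD tbS by blast
  show ?thesis
    unfolding dgls_decisions_def Let_def minimizers_eq at_current at_choice ..
qed

lemma eta_eq_0_at_minimum:
  assumes "finite (D i)" "finite (D j)" "x i \<in> D i" "x j \<in> D j"
    and min: "\<And>a b. a \<in> D i \<Longrightarrow> b \<in> D j \<Longrightarrow> f i j (x i) (x j) \<le> f i j a b"
  shows "eta D f x i j = 0"
proof -
  have "fmin D f i j = f i j (x i) (x j)"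
    unfolding fmin_def using assms by (intro Min_eqI) (auto intro: rev_image_eqI[of "(x i, x j)"])
  then show ?thesis
    by (simp add: eta_def)
qed

lemma dgls_decisions_no_violation_at_zero:
  assumes "finite (D i)" "finite (D j)" "x i \<in> D i" "x j \<in> D j" "0 \<le> u i j"
    and nonneg: "\<And>a b. a \<in> D i \<Longrightarrow> b \<in> D j \<Longrightarrow> 0 \<le> f i j a b"
    and zero: "f i j (x i) (x j) = 0"
  shows "\<not> snd (dgls_decisions D N f u tb C x) i j"
proof -
  have "eta D f x i j = 0"
    using assms by (intro eta_eq_0_at_minimum) simp_all
  then show ?thesis
    using dgls_decisions_violation \<open>0 \<le> u i j\<close> by fastforce
qed

lemma effcost_Add_eq_Mult:
  "MA i j a b = f i j a b * MM i j a b \<Longrightarrow> effcost Add f MA i a j b = effcost Mult f MM i a j b"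
  by (simp add: effcost_def algebra_simps)

definition coupled_states :: "('a \<Rightarrow> 'v set) \<Rightarrow> ('a \<Rightarrow> 'a set) \<Rightarrow> ('a \<Rightarrow> 'a \<Rightarrow> 'v \<Rightarrow> 'v \<Rightarrow> real)
    \<Rightarrow> ('a, 'v) dstate \<Rightarrow> ('a, 'v) dstate \<Rightarrow> bool" where
  "coupled_states D N f sA sM \<longleftrightarrow> fst sA = fst sM \<and> (\<forall>i. fst sA i \<in> D i) \<and>
     (\<forall>i. \<forall>j\<in>N i. \<forall>a\<in>D i. \<forall>b\<in>D j. snd sA i j a b = f i j a b * snd sM i j a b)"

lemma coupled_states_same_decisions:
  assumes finD: "\<And>i. finite (D i)" and neD: "\<And>i. D i \<noteq> {}"
    and tbS: "\<And>i S. S \<noteq> {} \<Longrightarrow> tb i S \<in> S"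
    and coupled: "coupled_states D N f (x, MA) (x, MM)"
  shows "dgls_decisions D N f u tb (\<lambda>i d. \<Sum>j\<in>N i. effcost Add f MA i d j (x j)) x
       = dgls_decisions D N f u tb (\<lambda>i d. \<Sum>j\<in>N i. effcost Mult f MM i d j (x j)) x"
proof -
  have xD: "\<And>i. x i \<in> D i"
    using coupled by (simp add: coupled_states_def)
  show ?thesis
    using coupled xD
    by (intro dgls_decisions_cost_cong[OF finD neD tbS xD] sum.cong refl effcost_Add_eq_Mult)
      (auto simp: coupled_states_def)
qed

lemma dgls_step_preserves_coupled_states:
  assumes finD: "\<And>i. finite (D i)" and neD: "\<And>i. D i \<noteq> {}"
    and tbS: "\<And>i S. S \<noteq> {} \<Longrightarrow> tb i S \<in> S"
    and transp: "\<And>i j a b. j \<in> N i \<Longrightarrow> a \<in> D i \<Longrightarrow> b \<in> D j \<Longrightarrow> f j i b a = f i j a b"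
    and binary: "\<And>i j a b. j \<in> N i \<Longrightarrow> a \<in> D i \<Longrightarrow> b \<in> D j \<Longrightarrow> f i j a b \<in> {0, 1}"
    and u_nonneg: "\<And>i j. 0 \<le> u i j"
    and coupled: "coupled_states D N f sA sM"
  shows "coupled_states D N f (dgls_step Add D N f \<gamma> u tb sA) (dgls_step Mult D N f \<gamma> u tb sM)"
proof -
  obtain x MA MM where sA: "sA = (x, MA)" and sM: "sM = (x, MM)"
    using coupled by (metis coupled_states_def prod.collapse)
  have xD: "\<And>i. x i \<in> D i"
    using coupled by (simp add: coupled_states_def sA sM)
  define C where "C = (\<lambda>i d. \<Sum>j\<in>N i. effcost Mult f MM i d j (x j))"
  have decisions_eq: "dgls_decisions D N f u tb (\<lambda>i d. \<Sum>j\<in>N i. effcost Add f MA i d j (x j)) x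
      = dgls_decisions D N f u tb C x"
    unfolding C_def using coupled_states_same_decisions[OF finD neD tbS] coupled sA sM by simp
  obtain x' viol where dec: "dgls_decisions D N f u tb C x = (x', viol)"
    by fastforce
  define inc where "inc = (\<lambda>i j a b.
    if j \<in> N i \<and> (viol i j \<or> viol j i) \<and> a = x i \<and> b = x j then 1 else (0::real))"
  have stepA: "dgls_step Add D N f \<gamma> u tb sA = (x', \<lambda>i j a b. \<gamma> * MA i j a b + inc i j a b)"
    by (simp add: sA dgls_step_via_decisions decisions_eq dec inc_def)
  have stepM: "dgls_step Mult D N f \<gamma> u tb sM = (x', \<lambda>i j a b. \<gamma> * MM i j a b + inc i j a b)"
    by (simp add: sM dgls_step_via_decisions C_def[symmetric] dec inc_def)
  have no_violation_at_zero: "\<not> viol i j" "\<not> viol j i"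
    if "j \<in> N i" "f i j (x i) (x j) = 0" for i j
  proof -
    have nonneg: "0 \<le> f i j a b" "0 \<le> f j i b a" if "a \<in> D i" "b \<in> D j" for a b
      using binary[OF \<open>j \<in> N i\<close> that] transp[OF \<open>j \<in> N i\<close> that] by auto
    show "\<not> viol i j" "\<not> viol j i"
      using dgls_decisions_no_violation_at_zero
          [where D = D and N = N and f = f and u = u and tb = tb and C = C and x = x]
        dec finD xD u_nonneg nonneg that transp[OF that(1) xD xD] by auto
  qed
  have inc_coupled: "f i j a b * inc i j a b = inc i j a b"
    if "j \<in> N i" "a \<in> D i" "b \<in> D j" for i j a b
  proof (cases "inc i j a b = 0")
    case False
    then have "a = x i" "b = x j" "viol i j \<or> viol j i"
      by (auto simp: inc_def split: if_splits)
    then have "f i j a b = 1"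
      using no_violation_at_zero[OF that(1)] binary[OF that] by auto
    then show ?thesis by simp
  qed simp
  have modifiers_coupled: "\<gamma> * MA i j a b + inc i j a b = f i j a b * (\<gamma> * MM i j a b + inc i j a b)"
    if "j \<in> N i" "a \<in> D i" "b \<in> D j" for i j a b
  proof -
    have "MA i j a b = f i j a b * MM i j a b"
      using coupled that by (simp add: coupled_states_def sA sM)
    then show ?thesis
      using inc_coupled[OF that] by (simp add: algebra_simps)
  qed
  have x'D: "\<And>i. x' i \<in> D i"
    using dgls_decisions_in_domain[of D _ tb x N f u C] finD neD tbS xD dec by simp
  show ?thesis
    unfolding coupled_states_def stepA stepM fst_conv snd_conv using x'D modifiers_coupled by blast
qed

theorem theorem3:
  fixes D :: "'a::linorder \<Rightarrow> 'v set" and N :: "'a \<Rightarrow> 'a set"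
    and f :: "'a \<Rightarrow> 'a \<Rightarrow> 'v \<Rightarrow> 'v \<Rightarrow> real" and \<gamma> :: real
    and u :: "nat \<Rightarrow> 'a \<Rightarrow> 'a \<Rightarrow> real" and tb :: "nat \<Rightarrow> 'a \<Rightarrow> 'v set \<Rightarrow> 'v"
    and x0 :: "'a \<Rightarrow> 'v"
  assumes finN: "\<And>i. finite (N i)"
    and irrefl: "\<And>i. i \<notin> N i"
    and symN: "\<And>i j. j \<in> N i \<longleftrightarrow> i \<in> N j"
    and finD: "\<And>i. finite (D i)" and neD: "\<And>i. D i \<noteq> {}"
    and transp: "\<And>i j a b. j \<in> N i \<Longrightarrow> a \<in> D i \<Longrightarrow> b \<in> D j \<Longrightarrow> f j i b a = f i j a b"
    and binary: "\<And>i j a b. j \<in> N i \<Longrightarrow> a \<in> D i \<Longrightarrow> b \<in> D j \<Longrightarrow> f i j a b \<in> {0, 1}"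
    and x0D: "\<And>i. x0 i \<in> D i"
    and tbS: "\<And>k i S. S \<noteq> {} \<Longrightarrow> tb k i S \<in> S"
    and urange: "\<And>k i j. 0 \<le> u k i j \<and> u k i j < 1"
  shows "\<forall>k. (\<forall>i. \<forall>j\<in>N i. \<forall>di\<in>D i. \<forall>dj\<in>D j.
              effcost Add f (snd (dgls_run Add D N f \<gamma> u tb x0 k)) i di j dj
            = effcost Mult f (snd (dgls_run Mult D N f \<gamma> u tb x0 k)) i di j dj)
          \<and> fst (dgls_run Add D N f \<gamma> u tb x0 k) = fst (dgls_run Mult D N f \<gamma> u tb x0 k)"
proof -
  have "coupled_states D N f (dgls_run Add D N f \<gamma> u tb x0 k) (dgls_run Mult D N f \<gamma> u tb x0 k)" for k
  proof (induction k)
    case 0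
    show ?case by (simp add: coupled_states_def x0D)
  next
    case (Suc k)
    have "\<And>i j. 0 \<le> u k i j"
      using urange by simp
    with Suc.IH show ?case
      by (simp add: dgls_step_preserves_coupled_states[OF finD neD tbS[where k = k] transp binary])
  qed
  then show ?thesis
    unfolding coupled_states_def by (simp add: effcost_Add_eq_Mult)
qed

end
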